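(* Let $a,b>0$ and $2\le k<m\le n-1$ be integers with $a^m\neq b^k$. Let $x_1,\dots,x_n$ and $y_1,\dots,y_n$ be positive real numbers such that $$x_I+y_I=2a\quad\text{and}\quad x_J+y_J=2b$$ whenever $I,J\subset\{1,\dots,n\}$, $|I|=k$ and $|J|=m$. Then there is a constant $c>0$ such that $x_\iota/y_\iota=c$ for $\iota=1,\dots,n$.
   Context: For real numbers $x_1,\dots,x_n$ and $I\subset\{1,\dots,n\}$, $x_I:=\prod_{\iota\in I}x_\iota$ (with $x_\emptyset=1$); $|I|$ is the cardinality of $I$. *)

theory Defs
  imports Main "HOL-Analysis.Analysis"
begin

definition multi_prod :: "(nat \<Rightarrow> real) \<Rightarrow> nat set \<Rightarrow> real" where
  "multi_prod x I = (\<Prod>i\<in>I. x i)"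

end

theory Submission
  imports Defs
begin

(* Comparing the k-sets S + {i} and S + {j} gives
   (x_i - x_j) x_S = (y_j - y_i) y_S  for every (k-1)-set S avoiding i and j.
   Applied to S = T + {p} and S = T + {q}, this shows that as soon as two ratios x_i/y_i
   and x_j/y_j differ, all other ratios coincide; hence all ratios except possibly the one
   at some index w equal a common value c.  The exchange identity then makes y constant,
   say t, off w, and the conditions for sets avoiding w and for sets containing w read
   X^d + t^d = x_w X^(d-1) + y_w t^(d-1) with X = c t, for d = k and d = m.
   If X = t, then a = t^k and b = t^m, contradicting a^m ~= b^k; otherwise the two
   equations force x_w = X and y_w = t. *)

lemma multi_prod_insert:
  "finite A \<Longrightarrow> i \<notin> A \<Longrightarrow> multi_prod f (insert i A) = f i * multi_prod f A"
  by (simp add: multi_prod_def)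

lemma multi_prod_pos: "(\<And>i. i \<in> A \<Longrightarrow> 0 < f i) \<Longrightarrow> 0 < multi_prod f A"
  unfolding multi_prod_def by (rule prod_pos)

lemma multi_prod_const: "(\<And>i. i \<in> A \<Longrightarrow> f i = t) \<Longrightarrow> multi_prod f A = t ^ card A"
  unfolding multi_prod_def by simp

lemma multi_prod_scaled:
  "(\<And>i. i \<in> A \<Longrightarrow> x i = c * y i) \<Longrightarrow> multi_prod x A = c ^ card A * multi_prod y A"
  unfolding multi_prod_def by (simp add: prod.distrib)

lemma obtain_subset_avoiding:
  assumes "finite U" "D \<subseteq> U" "d + card D \<le> card U"
  obtains S where "S \<subseteq> U - D" "card S = d"
proof -
  have "d \<le> card (U - D)"
    using assms by (simp add: card_Diff_subset finite_subset)
  then show ?thesis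
    using obtain_subset_with_card_n that by blast
qed

lemma obtain_elem_avoiding:
  assumes "finite D" "card D < card U"
  obtains p where "p \<in> U - D"
  using assms card_mono by (metis Diff_eq_empty_iff all_not_in_conv leD)

lemma power_combination_eq_zero:
  fixes X t u v :: "'a::linordered_field"
  assumes "0 < X" "0 < t" "X \<noteq> t" "K < M"
    and eq_K: "u * X ^ K + v * t ^ K = 0" and eq_M: "u * X ^ M + v * t ^ M = 0"
  shows "u = 0 \<and> v = 0"
proof -
  have M: "M = K + (M - K)" and "0 < M - K"
    using \<open>K < M\<close> by simp_all
  have "u * X ^ K * (X ^ (M - K) - t ^ (M - K)) = (u * X ^ M + v * t ^ M) - (u * X ^ K + v * t ^ K) * t ^ (M - K)"
    by (subst (1 2) M) (simp add: power_add algebra_simps)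
  also have "\<dots> = 0"
    using eq_K eq_M by simp
  finally have "u * X ^ K * (X ^ (M - K) - t ^ (M - K)) = 0" .
  moreover have "X ^ (M - K) \<noteq> t ^ (M - K)"
    using power_eq_iff_eq_base[OF \<open>0 < M - K\<close>, of X t] assms(1-3) by simp
  ultimately have "u = 0"
    using \<open>0 < X\<close> by simp
  with eq_K show ?thesis
    using \<open>0 < t\<close> by simp
qed

locale subset_sum_const =
  fixes n d :: nat and x y :: "nat \<Rightarrow> real" and e :: real
  assumes x_pos: "i \<in> {1..n} \<Longrightarrow> 0 < x i" and y_pos: "i \<in> {1..n} \<Longrightarrow> 0 < y i"
    and sum_eq: "I \<subseteq> {1..n} \<Longrightarrow> card I = d \<Longrightarrow> multi_prod x I + multi_prod y I = e"
begin

lemma multi_prod_x_pos: "A \<subseteq> {1..n} \<Longrightarrow> 0 < multi_prod x A"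
  by (intro multi_prod_pos x_pos) auto

lemma multi_prod_y_pos: "A \<subseteq> {1..n} \<Longrightarrow> 0 < multi_prod y A"
  by (intro multi_prod_pos y_pos) auto

lemma exchange_identity:
  assumes "i \<in> {1..n}" "j \<in> {1..n}" "S \<subseteq> {1..n} - {i, j}" "card S + 1 = d"
  shows "(x i - x j) * multi_prod x S = (y j - y i) * multi_prod y S"
proof -
  have "finite S" "i \<notin> S" "j \<notin> S"
    using assms(3) finite_subset by auto
  have "x l * multi_prod x S + y l * multi_prod y S = e" if "l \<in> {i, j}" for l
  proof -
    have "l \<notin> S"
      using that \<open>i \<notin> S\<close> \<open>j \<notin> S\<close> by auto
    moreover have "multi_prod x (insert l S) + multi_prod y (insert l S) = e"
      using assms that \<open>finite S\<close> \<open>l \<notin> S\<close> by (intro sum_eq) auto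
    ultimately show ?thesis
      using \<open>finite S\<close> by (simp add: multi_prod_insert)
  qed
  from this[of i] this[of j] show ?thesis
    unfolding left_diff_distrib by simp
qed

lemma ratio_eq_outside_pair:
  assumes "2 \<le> d" "d + 2 \<le> n" "i \<in> {1..n}" "j \<in> {1..n}" "x i / y i \<noteq> x j / y j"
    and "p \<in> {1..n} - {i, j}" "q \<in> {1..n} - {i, j}"
  shows "x p / y p = x q / y q"
proof -
  have card_ijpq: "card {i, j, p, q} \<le> 4"
    by (simp add: card_insert_if)
  obtain T where T: "T \<subseteq> {1..n} - {i, j, p, q}" "card T = d - 2"
    by (rule obtain_subset_avoiding[of "{1..n}" "{i, j, p, q}" "d - 2"]) (use assms card_ijpq in auto)
  have "finite T"
    using T(1) finite_subset by auto
  have exch: "(x i - x j) * x l * multi_prod x T = (y j - y i) * y l * multi_prod y T"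
    if "l \<in> {p, q}" for l
  proof -
    have "l \<notin> T" and sub: "insert l T \<subseteq> {1..n} - {i, j}"
      using T(1) that assms(6,7) by auto
    then have "card (insert l T) + 1 = d"
      using T(2) assms(1) \<open>finite T\<close> by simp
    from exchange_identity[OF assms(3,4) sub this] show ?thesis
      using \<open>finite T\<close> \<open>l \<notin> T\<close> by (simp add: multi_prod_insert mult.assoc)
  qed
  have "T \<subseteq> {1..n}"
    using T(1) by auto
  then have pos: "0 < multi_prod x T" "0 < multi_prod y T" "0 < y p" "0 < y q"
    using assms(6,7) multi_prod_x_pos multi_prod_y_pos y_pos by auto
  have "x i \<noteq> x j"
  proof
    assume "x i = x j"
    then have "y i = y j"
      using exch[of p] pos by simp
    with \<open>x i = x j\<close> assms(5) show False by simp
  qed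
  have "(x i - x j) * multi_prod x T * (x p * y q - x q * y p) = 0"
    using arg_cong[OF exch[of p], of "\<lambda>z. z * y q"] arg_cong[OF exch[of q], of "\<lambda>z. z * y p"]
    by (simp add: algebra_simps)
  with \<open>x i \<noteq> x j\<close> pos have "x p * y q = x q * y p"
    by simp
  with pos show ?thesis
    by (simp add: field_simps)
qed

lemma all_but_one_ratio_eq:
  assumes "2 \<le> d" "d + 2 \<le> n"
  obtains w c where "w \<in> {1..n}" "\<forall>p \<in> {1..n} - {w}. x p / y p = c"
proof -
  have one: "1 \<in> {1..n}"
    using assms by simp
  define c\<^sub>1 where "c\<^sub>1 = x 1 / y 1"
  show ?thesis
  proof (cases "\<forall>p \<in> {1..n}. x p / y p = c\<^sub>1")
    case True
    show ?thesis
      by (rule that[OF one]) (use True in auto)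
  next
    case False
    then obtain j where j: "j \<in> {1..n}" "x j / y j \<noteq> c\<^sub>1"
      by auto
    have "x 1 / y 1 \<noteq> x j / y j"
      using j(2) unfolding c\<^sub>1_def by (rule not_sym)
    then have "j \<noteq> 1"
      by blast
    obtain p where p: "p \<in> {1..n} - {1, j}"
      by (rule obtain_elem_avoiding[of "{1, j}" "{1..n}"]) (use assms in \<open>auto simp: card_insert_if\<close>)
    define c where "c = x p / y p"
    have off_pair: "\<forall>q \<in> {1..n} - {1, j}. x q / y q = c"
      using ratio_eq_outside_pair[OF assms one j(1) \<open>x 1 / y 1 \<noteq> x j / y j\<close> _ p] unfolding c_def by blast
    show ?thesis
    proof (cases "c\<^sub>1 = c")
      case True
      show ?thesis
        by (rule that[of j c]) (use True off_pair j(1) in \<open>auto simp: c\<^sub>1_def\<close>)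
    next
      case False
      obtain q where q: "q \<in> {1..n} - {1, j, p}"
        by (rule obtain_elem_avoiding[of "{1, j, p}" "{1..n}"]) (use assms in \<open>auto simp: card_insert_if\<close>)
      have "x 1 / y 1 \<noteq> x p / y p"
        using False unfolding c_def c\<^sub>1_def .
      then have "x j / y j = x q / y q"
        using ratio_eq_outside_pair[OF assms one, of p j q] j(1) p q \<open>j \<noteq> 1\<close> by blast
      then have "\<forall>r \<in> {1..n} - {1}. x r / y r = c"
        using off_pair q by auto
      then show ?thesis
        by (rule that[OF one])
    qed
  qed
qed

lemma y_const_off_exceptional:
  assumes "1 \<le> d" "d + 2 \<le> n" "w \<in> {1..n}" "\<forall>r \<in> {1..n} - {w}. x r / y r = c"
    and "p \<in> {1..n} - {w}" "q \<in> {1..n} - {w}"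
  shows "y p = y q"
proof -
  have card_wpq: "card {w, p, q} \<le> 3"
    by (simp add: card_insert_if)
  obtain S where S: "S \<subseteq> {1..n} - {w, p, q}" "card S = d - 1"
    by (rule obtain_subset_avoiding[of "{1..n}" "{w, p, q}" "d - 1"]) (use assms card_wpq in auto)
  have x_scaled: "x r = c * y r" if "r \<in> {1..n} - {w}" for r
  proof -
    have "x r / y r = c" "0 < y r"
      using assms(4) y_pos that by auto
    then show ?thesis
      by (simp add: field_simps)
  qed
  have "0 < c"
    using assms(4,5) x_pos y_pos by force
  have "multi_prod x S = c ^ card S * multi_prod y S"
    using S(1) x_scaled by (intro multi_prod_scaled) auto
  moreover have "(x p - x q) * multi_prod x S = (y q - y p) * multi_prod y S"
    using S assms(1,5,6) by (intro exchange_identity) auto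
  ultimately have "(c * y p - c * y q) * (c ^ card S * multi_prod y S) = (y q - y p) * multi_prod y S"
    using x_scaled assms(5,6) by simp
  then have "(y p - y q) * (c ^ Suc (card S) + 1) * multi_prod y S = 0"
    by (simp add: algebra_simps)
  moreover have "0 < c ^ Suc (card S) + 1"
    using \<open>0 < c\<close> by (simp add: add_pos_pos)
  moreover have "0 < multi_prod y S"
    using S(1) by (intro multi_prod_y_pos) auto
  ultimately show ?thesis
    by simp
qed

lemma sums_with_exceptional:
  assumes "1 \<le> d" "d + 1 \<le> n" "w \<in> {1..n}" "\<forall>r \<in> {1..n} - {w}. x r = X \<and> y r = t"
  shows "X ^ d + t ^ d = e" "x w * X ^ (d - 1) + y w * t ^ (d - 1) = e"
proof -
  have card_off: "card ({1..n} - {w}) = n - 1"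
    using assms(3) by simp
  obtain A where A: "A \<subseteq> {1..n} - {w}" "card A = d"
    by (rule obtain_subset_with_card_n[of d "{1..n} - {w}"]) (use assms card_off in auto)
  moreover have "multi_prod x A = X ^ card A" "multi_prod y A = t ^ card A"
    using A(1) assms(4) by (auto intro!: multi_prod_const)
  ultimately show "X ^ d + t ^ d = e"
    using sum_eq[of A] by auto
  obtain B where B: "B \<subseteq> {1..n} - {w}" "card B = d - 1"
    by (rule obtain_subset_with_card_n[of "d - 1" "{1..n} - {w}"]) (use assms card_off in auto)
  have "finite B" "w \<notin> B"
    using B(1) finite_subset by auto
  then have "multi_prod x (insert w B) + multi_prod y (insert w B) = e"
    using B assms by (intro sum_eq) auto
  moreover have "multi_prod x B = X ^ card B" "multi_prod y B = t ^ card B"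
    using B(1) assms(4) by (auto intro!: multi_prod_const)
  ultimately show "x w * X ^ (d - 1) + y w * t ^ (d - 1) = e"
    using \<open>finite B\<close> \<open>w \<notin> B\<close> B(2) by (simp add: multi_prod_insert)
qed

end

lemma exceptional_coordinates_eq:
  fixes a b X t u v :: real
  assumes "0 < X" "0 < t" "1 \<le> k" "k < m" "a ^ m \<noteq> b ^ k"
    and "X ^ k + t ^ k = 2 * a" "u * X ^ (k - 1) + v * t ^ (k - 1) = 2 * a"
    and "X ^ m + t ^ m = 2 * b" "u * X ^ (m - 1) + v * t ^ (m - 1) = 2 * b"
  shows "u = X \<and> v = t"
proof -
  have "X \<noteq> t"
  proof
    assume "X = t"
    then have "a = t ^ k" "b = t ^ m"
      using assms by auto
    then have "a ^ m = b ^ k"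
      by (simp add: power_mult[symmetric] mult.commute)
    with \<open>a ^ m \<noteq> b ^ k\<close> show False ..
  qed
  have combination: "(u - X) * X ^ (d - 1) + (v - t) * t ^ (d - 1) = 0"
    if "0 < d" "X ^ d + t ^ d = e" "u * X ^ (d - 1) + v * t ^ (d - 1) = e" for d e
  proof -
    have "(u - X) * X ^ (d - 1) + (v - t) * t ^ (d - 1)
        = (u * X ^ (d - 1) + v * t ^ (d - 1)) - (X ^ (d - 1) * X + t ^ (d - 1) * t)"
      by (simp add: algebra_simps)
    also have "\<dots> = 0"
      using that power_minus_mult[OF \<open>0 < d\<close>, of X] power_minus_mult[OF \<open>0 < d\<close>, of t] by simp
    finally show ?thesis .
  qed
  have "u - X = 0 \<and> v - t = 0"
    using assms \<open>X \<noteq> t\<close>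
    by (intro power_combination_eq_zero[of X t "k - 1" "m - 1"] combination) auto
  then show ?thesis
    by simp
qed

lemma exceptional_ratio_eq:
  fixes a b :: real
  assumes K: "subset_sum_const n k x y (2 * a)" and M: "subset_sum_const n m x y (2 * b)"
    and "1 \<le> k" "k < m" "m + 1 \<le> n" "a ^ m \<noteq> b ^ k"
    and w: "w \<in> {1..n}" and ratio: "\<forall>r \<in> {1..n} - {w}. x r / y r = c"
  shows "x w / y w = c"
proof -
  interpret K: subset_sum_const n k x y "2 * a" by (rule K)
  interpret M: subset_sum_const n m x y "2 * b" by (rule M)
  obtain p where p: "p \<in> {1..n} - {w}"
    by (rule obtain_elem_avoiding[of "{w}" "{1..n}"]) (use assms in auto)
  define t where "t = y p"
  have "0 < t" "0 < c"
    using p ratio K.x_pos K.y_pos unfolding t_def by force+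
  have off: "\<forall>r \<in> {1..n} - {w}. x r = c * t \<and> y r = t"
  proof
    fix r
    assume r: "r \<in> {1..n} - {w}"
    then have "y r = t"
      using K.y_const_off_exceptional[OF _ _ w ratio r p] assms unfolding t_def by auto
    moreover have "x r / y r = c"
      using ratio r by blast
    ultimately show "x r = c * t \<and> y r = t"
      using \<open>0 < t\<close> by (simp add: field_simps)
  qed
  have "x w = c * t \<and> y w = t"
    using assms \<open>0 < t\<close> \<open>0 < c\<close>
      K.sums_with_exceptional[OF _ _ w off] M.sums_with_exceptional[OF _ _ w off]
    by (intro exceptional_coordinates_eq[of "c * t" t k m a b]) auto
  then show ?thesis
    using \<open>0 < t\<close> by simp
qed

theorem lemma4p1:
  fixes a b :: int and k m n :: nat and x y :: "nat \<Rightarrow> real"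
  assumes "a > 0" and "b > 0"
    and "2 \<le> k" and "k < m" and "m \<le> n - 1"
    and "a ^ m \<noteq> b ^ k"
    and "\<forall>i\<in>{1..n}. x i > 0" and "\<forall>i\<in>{1..n}. y i > 0"
    and "\<forall>I. I \<subseteq> {1..n} \<and> card I = k \<longrightarrow> multi_prod x I + multi_prod y I = 2 * a"
    and "\<forall>J. J \<subseteq> {1..n} \<and> card J = m \<longrightarrow> multi_prod x J + multi_prod y J = 2 * b"
  shows "\<exists>c::real. c > 0 \<and> (\<forall>i\<in>{1..n}. x i / y i = c)"
proof -
  have K: "subset_sum_const n k x y (2 * real_of_int a)"
    and M: "subset_sum_const n m x y (2 * real_of_int b)"
    using assms by (unfold_locales; auto)+
  have bounds: "k + 2 \<le> n" "m + 1 \<le> n"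
    using assms by auto
  obtain w c where w: "w \<in> {1..n}" "\<forall>r \<in> {1..n} - {w}. x r / y r = c"
    by (rule subset_sum_const.all_but_one_ratio_eq[OF K \<open>2 \<le> k\<close> bounds(1)])
  have "real_of_int a ^ m \<noteq> real_of_int b ^ k"
    using \<open>a ^ m \<noteq> b ^ k\<close> by (metis of_int_eq_iff of_int_power)
  then have "x w / y w = c"
    using assms(3,4) bounds(2) by (intro exceptional_ratio_eq[OF K M _ _ _ _ w]) auto
  with w have "\<forall>i \<in> {1..n}. x i / y i = c" "0 < c"
    using assms(7,8) by auto
  then show ?thesis
    by blast
qed

end
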